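(* Let $(X_m)_{m\in\mathbb{N}}$ be subspaces of $L_2(0,1)$ with $\dim X_m=m$, and let $Q_m$ denote the orthogonal projection in $L_2(0,1)$ (with its usual inner product) onto $X_m$. Assume there is a constant $L<\infty$ such that $$\inf\{\|x-z\|_0:\ z\in X_m\}\le \frac{L}{m}\|x\|_{1,0}\qquad\text{for all }x\in H_1(0,1),\ m\in\mathbb{N}.$$ Let $\sigma>0$, and define $Q_m^\sigma:=D_\sigma Q_m D_\sigma^{-1}$. Then each $Q_m^\sigma$ is an orthogonal projection with respect to $\langle\cdot,\cdot\rangle_\sigma$ onto the space $D_\sigma X_m$, and $$\inf\{\|x-z\|_\sigma:\ z\in D_\sigma X_m\}\le \frac{\sqrt2(1+\sigma)L}{m}\|x\|_{1,\sigma}\qquad\text{for all }x\in H_1^\sigma(0,1),\ m\in\mathbb{N}.$$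
   Context: All functions are real-valued. For $\sigma\ge0$, $L_2^\sigma(0,1)$ denotes $L_2(0,1)$ equipped with the inner product $\langle x,y\rangle_\sigma=\int_0^1 e^{-2\sigma t}x(t)y(t)\,dt$ and norm $\|x\|_\sigma^2=\int_0^1 e^{-2\sigma t}x(t)^2\,dt$ (so $\|\cdot\|_0$ is the usual $L_2$ norm). $H_1^\sigma(0,1)$ denotes the space of absolutely continuous $x$ with weak derivative $x'\in L_2(0,1)$, with norm $\|x\|_{1,\sigma}:=\frac12\left(\|x\|_\sigma^2+\|x'\|_\sigma^2\right)^{1/2}$; $H_1(0,1)=H_1^0(0,1)$. With $f_\sigma(t)=e^{\sigma t}$, $D_\sigma x:=f_\sigma x$ is the multiplication operator (an isometry from $L_2(0,1)$ onto $L_2^\sigma(0,1)$). *)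

theory Defs
  imports "HOL-Analysis.Analysis"
begin

text \<open>Representatives of elements of L2(0,1): Lebesgue measurable, square integrable on [0,1].\<close>
definition L2 :: "(real \<Rightarrow> real) set" where
  "L2 = {x. x \<in> borel_measurable (lebesgue_on {0..1}) \<and>
             integrable (lebesgue_on {0..1}) (\<lambda>t. (x t)\<^sup>2)}"

definition ip :: "real \<Rightarrow> (real \<Rightarrow> real) \<Rightarrow> (real \<Rightarrow> real) \<Rightarrow> real" where
  "ip \<sigma> x y = (LINT t|lebesgue_on {0..1}. exp (-2 * \<sigma> * t) * x t * y t)"

definition nrm :: "real \<Rightarrow> (real \<Rightarrow> real) \<Rightarrow> real" where
  "nrm \<sigma> x = sqrt (ip \<sigma> x x)"

text \<open>H1 membership: x is absolutely continuous on [0,1] with weak derivative x' in L2,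
  i.e. x is the indefinite integral of x'.\<close>
definition has_weak_deriv :: "(real \<Rightarrow> real) \<Rightarrow> (real \<Rightarrow> real) \<Rightarrow> bool" where
  "has_weak_deriv x x' \<longleftrightarrow> x' \<in> L2 \<and>
     (\<forall>t\<in>{0..1}. x t = x 0 + (LINT s|lebesgue_on {0..t}. x' s))"

definition nrm1 :: "real \<Rightarrow> (real \<Rightarrow> real) \<Rightarrow> (real \<Rightarrow> real) \<Rightarrow> real" where
  "nrm1 \<sigma> x x' = (1/2) * sqrt ((nrm \<sigma> x)\<^sup>2 + (nrm \<sigma> x')\<^sup>2)"

definition L2_subspace_dim :: "(real \<Rightarrow> real) set \<Rightarrow> nat \<Rightarrow> bool" where
  "L2_subspace_dim X m \<longleftrightarrow> (\<exists>b. (\<forall>i<m. b i \<in> L2) \<and>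
     X = {(\<lambda>t. \<Sum>i<m. c i * b i t) | c. True} \<and>
     (\<forall>c. nrm 0 (\<lambda>t. \<Sum>i<m. c i * b i t) = 0 \<longrightarrow> (\<forall>i<m. c i = 0)))"

definition is_orth_proj :: "real \<Rightarrow> ((real \<Rightarrow> real) \<Rightarrow> (real \<Rightarrow> real)) \<Rightarrow> (real \<Rightarrow> real) set \<Rightarrow> bool" where
  "is_orth_proj \<sigma> Q X \<longleftrightarrow> (\<forall>x\<in>L2. Q x \<in> X \<and> (\<forall>z\<in>X. ip \<sigma> (\<lambda>t. x t - Q x t) z = 0))"

definition D :: "real \<Rightarrow> (real \<Rightarrow> real) \<Rightarrow> (real \<Rightarrow> real)" where
  "D \<sigma> x = (\<lambda>t. exp (\<sigma> * t) * x t)"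

definition dist_to :: "real \<Rightarrow> (real \<Rightarrow> real) \<Rightarrow> (real \<Rightarrow> real) set \<Rightarrow> real" where
  "dist_to \<sigma> x X = Inf ((\<lambda>z. nrm \<sigma> (\<lambda>t. x t - z t)) ` X)"

end

theory Submission
  imports Defs
begin

text \<open>The weight \<open>exp (-2 \<sigma> t)\<close> of the \<open>\<sigma>\<close>-inner product is cancelled exactly by
  \<open>D \<sigma>\<close>, so \<open>ip \<sigma> (x - D \<sigma> y) (D \<sigma> z) = ip 0 (D (-\<sigma>) x - y) z\<close>. Hence the conjugated
  projection is orthogonal for \<open>ip \<sigma>\<close>, and the \<open>\<sigma>\<close>-distance from \<open>x\<close> to \<open>D \<sigma> ` X\<close>
  is the unweighted distance from \<open>D (-\<sigma>) x\<close> to \<open>X\<close>. By the product rule, \<open>D (-\<sigma>) x\<close>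
  has weak derivative \<open>exp (-\<sigma> t) (x' - \<sigma> x)\<close>, whose unweighted squared norm is at most
  \<open>2 \<parallel>x'\<parallel>\<^sub>\<sigma>\<^sup>2 + 2 \<sigma>\<^sup>2 \<parallel>x\<parallel>\<^sub>\<sigma>\<^sup>2\<close>; thus
  \<open>\<parallel>D (-\<sigma>) x\<parallel>\<^sub>1\<^sub>,\<^sub>0 \<le> \<surd>2 (1 + \<sigma>) \<parallel>x\<parallel>\<^sub>1\<^sub>,\<^sub>\<sigma>\<close> and the unweighted
  approximation hypothesis applies. For an absolutely continuous \<open>x\<close> the product rule is an
  instance of Fubini's theorem.\<close>

lemma square_le_of_abs_le: "\<bar>a\<bar> \<le> b \<Longrightarrow> a\<^sup>2 \<le> (b::real)\<^sup>2"
  by (meson abs_ge_self abs_le_square_iff order_trans)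

lemma L2_bounded:
  assumes "g \<in> borel_measurable (lebesgue_on {0..1})" and "\<And>t. t \<in> {0..1} \<Longrightarrow> \<bar>g t\<bar> \<le> B"
  shows "g \<in> L2"
  unfolding L2_def
proof (intro CollectI conjI assms)
  show "integrable (lebesgue_on {0..1}) (\<lambda>t. (g t)\<^sup>2)"
  proof (rule Bochner_Integration.integrable_bound[of _ "\<lambda>_. B\<^sup>2"])
    show "integrable (lebesgue_on {0..1}) (\<lambda>_::real. B\<^sup>2)"
      by (rule Lebesgue_Measure.integrable_const_ivl)
    show "(\<lambda>t. (g t)\<^sup>2) \<in> borel_measurable (lebesgue_on {0..1})"
      using assms(1) by measurable
    show "AE t in lebesgue_on {0..1}. norm ((g t)\<^sup>2) \<le> norm (B\<^sup>2)"
      using assms(2) by (intro AE_I2) (simp add: square_le_of_abs_le)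
  qed
qed

lemma L2_mult_bounded:
  assumes u: "u \<in> L2" and g: "g \<in> borel_measurable (lebesgue_on {0..1})"
    and gB: "\<And>t. t \<in> {0..1} \<Longrightarrow> \<bar>g t\<bar> \<le> B"
  shows "(\<lambda>t. g t * u t) \<in> L2"
  unfolding L2_def
proof (intro CollectI conjI)
  have um: "u \<in> borel_measurable (lebesgue_on {0..1})" and ui: "integrable (lebesgue_on {0..1}) (\<lambda>t. (u t)\<^sup>2)"
    using u unfolding L2_def by auto
  show m: "(\<lambda>t. g t * u t) \<in> borel_measurable (lebesgue_on {0..1})"
    using g um by measurable
  show "integrable (lebesgue_on {0..1}) (\<lambda>t. (g t * u t)\<^sup>2)"
  proof (rule Bochner_Integration.integrable_bound[of _ "\<lambda>t. B\<^sup>2 * (u t)\<^sup>2"])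
    show "integrable (lebesgue_on {0..1}) (\<lambda>t. B\<^sup>2 * (u t)\<^sup>2)"
      using ui by simp
    show "(\<lambda>t. (g t * u t)\<^sup>2) \<in> borel_measurable (lebesgue_on {0..1})"
      using m by measurable
    have "(g t)\<^sup>2 * (u t)\<^sup>2 \<le> B\<^sup>2 * (u t)\<^sup>2" if "t \<in> {0..1}" for t
      using gB[OF that] by (intro mult_right_mono) (simp_all add: square_le_of_abs_le)
    then show "AE t in lebesgue_on {0..1}. norm ((g t * u t)\<^sup>2) \<le> norm (B\<^sup>2 * (u t)\<^sup>2)"
      by (intro AE_I2) (simp add: power_mult_distrib)
  qed
qed

lemma L2_diff:
  assumes u: "u \<in> L2" and v: "v \<in> L2"
  shows "(\<lambda>t. u t - v t) \<in> L2"
  unfolding L2_def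
proof (intro CollectI conjI)
  have [measurable]: "u \<in> borel_measurable (lebesgue_on {0..1})" "v \<in> borel_measurable (lebesgue_on {0..1})"
    and ui: "integrable (lebesgue_on {0..1}) (\<lambda>t. (u t)\<^sup>2)" and vi: "integrable (lebesgue_on {0..1}) (\<lambda>t. (v t)\<^sup>2)"
    using u v unfolding L2_def by auto
  show "(\<lambda>t. u t - v t) \<in> borel_measurable (lebesgue_on {0..1})" by measurable
  show "integrable (lebesgue_on {0..1}) (\<lambda>t. (u t - v t)\<^sup>2)"
  proof (rule Bochner_Integration.integrable_bound[of _ "\<lambda>t. 2 * (u t)\<^sup>2 + 2 * (v t)\<^sup>2"])
    show "integrable (lebesgue_on {0..1}) (\<lambda>t. 2 * (u t)\<^sup>2 + 2 * (v t)\<^sup>2)"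
      using ui vi by simp
    show "(\<lambda>t. (u t - v t)\<^sup>2) \<in> borel_measurable (lebesgue_on {0..1})" by measurable
    have "(a - b)\<^sup>2 \<le> 2 * a\<^sup>2 + 2 * b\<^sup>2" for a b :: real
      using zero_le_power2[of "a + b"] by (simp add: power2_eq_square algebra_simps)
    then show "AE t in lebesgue_on {0..1}. norm ((u t - v t)\<^sup>2) \<le> norm (2 * (u t)\<^sup>2 + 2 * (v t)\<^sup>2)"
      by (intro AE_I2) simp
  qed
qed

lemma L2_integrable:
  assumes "u \<in> L2" shows "integrable (lebesgue_on {0..1}) u"
proof (rule Bochner_Integration.integrable_bound[of _ "\<lambda>t. 1 + (u t)\<^sup>2"])
  show "integrable (lebesgue_on {0..1}) (\<lambda>t. 1 + (u t)\<^sup>2)"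
    using assms unfolding L2_def by simp
  show "u \<in> borel_measurable (lebesgue_on {0..1})"
    using assms unfolding L2_def by simp
  have "\<bar>a\<bar> \<le> 1 + a\<^sup>2" for a :: real
    using zero_le_power2[of "\<bar>a\<bar> - 1"] by (simp add: power2_eq_square algebra_simps)
  then show "AE t in lebesgue_on {0..1}. norm (u t) \<le> norm (1 + (u t)\<^sup>2)"
    by (intro AE_I2) simp
qed

lemma ip_nonneg: "0 \<le> ip \<sigma> x x"
  unfolding ip_def by (rule Bochner_Integration.integral_nonneg) (simp add: mult.assoc)

lemma nrm_nonneg: "0 \<le> nrm \<sigma> x"
  unfolding nrm_def using ip_nonneg by simp

lemma nrm_square: "(nrm \<sigma> x)\<^sup>2 = ip \<sigma> x x"
  unfolding nrm_def using ip_nonneg by simp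

lemma ip_diff_scaled_le:
  assumes u: "u \<in> L2" and v: "v \<in> L2"
  shows "ip 0 (\<lambda>t. u t - c * v t) (\<lambda>t. u t - c * v t) \<le> 2 * ip 0 u u + 2 * c\<^sup>2 * ip 0 v v"
proof -
  have ui: "integrable (lebesgue_on {0..1}) (\<lambda>t. (u t)\<^sup>2)" and vi: "integrable (lebesgue_on {0..1}) (\<lambda>t. (v t)\<^sup>2)"
    and wi: "integrable (lebesgue_on {0..1}) (\<lambda>t. (u t - c * v t)\<^sup>2)"
    using u v L2_diff[OF u L2_mult_bounded[OF v, of "\<lambda>_. c" "\<bar>c\<bar>"]] unfolding L2_def by auto
  have "(a - c * b)\<^sup>2 \<le> 2 * a\<^sup>2 + 2 * c\<^sup>2 * b\<^sup>2" for a b :: real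
    using zero_le_power2[of "a + c * b"] by (simp add: power2_eq_square algebra_simps)
  then have "(LINT t|lebesgue_on {0..1}. (u t - c * v t)\<^sup>2)
      \<le> (LINT t|lebesgue_on {0..1}. 2 * (u t)\<^sup>2 + 2 * c\<^sup>2 * (v t)\<^sup>2)"
    using ui vi wi by (intro integral_mono) auto
  then show ?thesis
    using ui vi unfolding ip_def by (simp add: power2_eq_square)
qed

lemma D_D_neg [simp]: "D \<sigma> (D (- \<sigma>) x) = x"
  unfolding D_def by (simp add: fun_eq_iff exp_minus)

lemma diff_D_eq_D: "(\<lambda>t. x t - D \<sigma> y t) = D \<sigma> (\<lambda>t. D (- \<sigma>) x t - y t)"
  unfolding D_def by (simp add: fun_eq_iff right_diff_distrib exp_minus)

lemma ip_D: "ip \<sigma> (D \<sigma> x) (D \<sigma> y) = ip 0 x y"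
proof -
  have weight: "exp (- 2 * \<sigma> * t) * (exp (\<sigma> * t) * x t) * (exp (\<sigma> * t) * y t)
      = exp (- 2 * 0 * t) * x t * y t" for t
  proof -
    have "exp (- 2 * \<sigma> * t) * exp (\<sigma> * t) * exp (\<sigma> * t) = 1"
      by (simp flip: exp_add)
    then show ?thesis by (simp only: ac_simps mult_1 mult_zero_left exp_zero)
  qed
  show ?thesis unfolding ip_def D_def weight ..
qed

lemma nrm_D: "nrm \<sigma> (D \<sigma> x) = nrm 0 x"
  unfolding nrm_def ip_D ..

lemma ip_D_neg: "ip 0 (D (- \<sigma>) x) (D (- \<sigma>) y) = ip \<sigma> x y"
  using ip_D[of \<sigma> "D (- \<sigma>) x" "D (- \<sigma>) y"] by simp

lemma D_L2:
  assumes "x \<in> L2" shows "D \<sigma> x \<in> L2"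
  unfolding D_def
proof (rule L2_mult_bounded[OF assms])
  show "(\<lambda>t. exp (\<sigma> * t)) \<in> borel_measurable (lebesgue_on {0..1})"
    by (intro measurable_restrict_space1 measurable_completion) measurable
  show "\<bar>exp (\<sigma> * t)\<bar> \<le> exp \<bar>\<sigma>\<bar>" if "t \<in> {0..1}" for t
  proof -
    have "\<bar>\<sigma> * t\<bar> \<le> \<bar>\<sigma>\<bar>"
      using that by (simp add: abs_mult mult_left_le)
    then show ?thesis by simp
  qed
qed

lemma is_orth_proj_D_conj:
  assumes "is_orth_proj 0 Q X"
  shows "is_orth_proj \<sigma> (\<lambda>x. D \<sigma> (Q (D (- \<sigma>) x))) (D \<sigma> ` X)"
  unfolding is_orth_proj_def
proof (intro ballI conjI)
  fix x assume "x \<in> L2"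
  then have "D (- \<sigma>) x \<in> L2" by (rule D_L2)
  then have QX: "Q (D (- \<sigma>) x) \<in> X"
    and orth: "\<And>z. z \<in> X \<Longrightarrow> ip 0 (\<lambda>t. D (- \<sigma>) x t - Q (D (- \<sigma>) x) t) z = 0"
    using assms unfolding is_orth_proj_def by auto
  show "D \<sigma> (Q (D (- \<sigma>) x)) \<in> D \<sigma> ` X"
    using QX by (rule imageI)
  fix w assume "w \<in> D \<sigma> ` X"
  then obtain z where "z \<in> X" and "w = D \<sigma> z" by blast
  then show "ip \<sigma> (\<lambda>t. x t - D \<sigma> (Q (D (- \<sigma>) x)) t) w = 0"
    by (simp only: diff_D_eq_D ip_D orth)
qed

lemma dist_to_D_image: "dist_to \<sigma> x (D \<sigma> ` X) = dist_to 0 (D (- \<sigma>) x) X"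
  unfolding dist_to_def image_image diff_D_eq_D nrm_D ..

lemma dist_to_nonneg: "X \<noteq> {} \<Longrightarrow> 0 \<le> dist_to \<sigma> x X"
  unfolding dist_to_def by (intro cInf_greatest) (auto simp: nrm_nonneg)

definition indefinite_integral :: "(real \<Rightarrow> real) \<Rightarrow> real \<Rightarrow> real" where
  "indefinite_integral h t = (LINT r|lborel. (if 0 \<le> r \<and> r \<le> t then h r else 0))"

lemma integrable_if_bounded_mult:
  fixes h g :: "real \<Rightarrow> real" and P :: "real \<Rightarrow> bool"
  assumes [measurable]: "h \<in> borel_measurable borel" "g \<in> borel_measurable borel" "Measurable.pred borel P"
    and h: "integrable lborel h" and gB: "\<And>s. P s \<Longrightarrow> \<bar>g s\<bar> \<le> B"
  shows "integrable lborel (\<lambda>s. if P s then g s * h s else 0)"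
proof (rule Bochner_Integration.integrable_bound[of _ "\<lambda>s. B * \<bar>h s\<bar>"])
  show "integrable lborel (\<lambda>s. B * \<bar>h s\<bar>)"
    using h by simp
  show "(\<lambda>s. if P s then g s * h s else 0) \<in> borel_measurable lborel"
    by measurable
  have "\<bar>g s * h s\<bar> \<le> \<bar>B * \<bar>h s\<bar>\<bar>" if "P s" for s
    using gB[OF that] by (auto simp: abs_mult intro: mult_right_mono)
  then show "AE s in lborel. norm (if P s then g s * h s else 0) \<le> norm (B * \<bar>h s\<bar>)"
    by (intro AE_I2) simp
qed

lemma integrable_if_interval:
  fixes h :: "real \<Rightarrow> real"
  assumes [measurable]: "h \<in> borel_measurable borel" and "integrable lborel h"
  shows "integrable lborel (\<lambda>r. if a \<le> r \<and> r \<le> b then h r else 0)"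
  using integrable_if_bounded_mult[OF assms(1) _ _ assms(2), of "\<lambda>_. 1" "\<lambda>r. a \<le> r \<and> r \<le> b" 1]
  by (simp only: mult_1) simp_all

lemma indefinite_integral_measurable [measurable]:
  assumes [measurable]: "h \<in> borel_measurable borel"
  shows "indefinite_integral h \<in> borel_measurable borel"
proof -
  have "(\<lambda>(t, r). if 0 \<le> r \<and> r \<le> t then h r else 0) \<in> borel_measurable (borel \<Otimes>\<^sub>M lborel)"
    by measurable
  then show ?thesis
    unfolding indefinite_integral_def using lborel.borel_measurable_lebesgue_integral by simp
qed

lemma abs_indefinite_integral_le:
  assumes [measurable]: "h \<in> borel_measurable borel" and h: "integrable lborel h"
  shows "\<bar>indefinite_integral h t\<bar> \<le> (LINT r|lborel. \<bar>h r\<bar>)"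
proof -
  have "\<bar>indefinite_integral h t\<bar> \<le> (LINT r|lborel. \<bar>if 0 \<le> r \<and> r \<le> t then h r else 0\<bar>)"
    unfolding indefinite_integral_def
    using integral_norm_bound[of lborel "\<lambda>r. if 0 \<le> r \<and> r \<le> t then h r else 0"]
    by (simp only: real_norm_def)
  also have "\<dots> \<le> (LINT r|lborel. \<bar>h r\<bar>)"
    using integrable_if_interval[OF assms] h by (intro integral_mono) auto
  finally show ?thesis .
qed

lemma integral_lebesgue_on_eq_lborel:
  fixes f \<phi> :: "real \<Rightarrow> real"
  assumes [measurable]: "\<phi> \<in> borel_measurable borel"
    and ae: "AE s in lborel. a \<le> s \<and> s \<le> b \<longrightarrow> f s = \<phi> s"
  shows "(LINT s|lebesgue_on {a..b}. f s) = (LINT s|lborel. (if a \<le> s \<and> s \<le> b then \<phi> s else 0))"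
proof -
  let ?g = "\<lambda>s. if a \<le> s \<and> s \<le> b then \<phi> s else 0"
  have gm: "?g \<in> borel_measurable lborel" by measurable
  have gml: "?g \<in> borel_measurable lebesgue" using gm by (rule measurable_completion)
  have ae': "AE s in lebesgue. ?g s = (if s \<in> {a..b} then f s else 0)"
    using AE_completion[OF ae] by (auto elim!: eventually_mono)
  have fm: "(\<lambda>s. if s \<in> {a..b} then f s else 0) \<in> borel_measurable lebesgue"
    by (rule borel_measurable_AE[OF gml ae'])
  have "(LINT s|lebesgue_on {a..b}. f s) = (LINT s|lebesgue. (if s \<in> {a..b} then f s else 0))"
    by (rule Lebesgue_Measure.integral_restrict_UNIV[symmetric]) simp
  also have "\<dots> = (LINT s|lebesgue. ?g s)"
    by (rule integral_cong_AE[OF fm gml]) (use ae' in \<open>auto elim!: eventually_mono\<close>)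
  also have "\<dots> = (LINT s|lborel. ?g s)"
    by (rule integral_completion[OF gm])
  finally show ?thesis .
qed

text \<open>Replacing the derivative by a Borel representative lets the product rule below be
  proved on lborel, where Fubini's theorem is available.\<close>

lemma has_weak_deriv_borel_representative:
  assumes "has_weak_deriv x x'"
  obtains h where "h \<in> borel_measurable borel" "integrable lborel h"
    "AE s in lborel. 0 \<le> s \<and> s \<le> 1 \<longrightarrow> x' s = h s"
    "\<And>t. 0 \<le> t \<Longrightarrow> t \<le> 1 \<Longrightarrow> x t = x 0 + indefinite_integral h t"
proof -
  have x': "x' \<in> L2" and x: "\<forall>t\<in>{0..1}. x t = x 0 + (LINT s|lebesgue_on {0..t}. x' s)"
    using assms unfolding has_weak_deriv_def by blast+
  define g where "g s = (if s \<in> {0..1} then x' s else 0)" for s :: real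
  have "g \<in> borel_measurable lebesgue"
    unfolding g_def using x' by (intro borel_measurable_if_I) (simp_all add: L2_def)
  then obtain h where hm: "h \<in> borel_measurable lborel" and gh: "AE s in lborel. g s = h s"
    using completion_ex_borel_measurable_real by blast
  have "integrable lebesgue g"
    unfolding g_def using L2_integrable[OF x']
    by (intro Lebesgue_Measure.integrable_restrict_UNIV[THEN iffD2]) simp_all
  then have "integrable lebesgue h"
    by (rule integrable_cong_AE_imp[OF _ measurable_completion[OF hm] AE_completion[OF gh]])
  then have hi: "integrable lborel h"
    using integrable_completion[OF hm] by blast
  have hm': "h \<in> borel_measurable borel"
    using hm by (simp add: measurable_lborel1)
  have ae: "AE s in lborel. 0 \<le> s \<and> s \<le> 1 \<longrightarrow> x' s = h s"
    using gh by (rule eventually_mono) (auto simp: g_def)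
  show ?thesis
  proof (rule that[OF hm' hi ae])
    fix t :: real assume t: "0 \<le> t" "t \<le> 1"
    have "(LINT s|lebesgue_on {0..t}. x' s) = indefinite_integral h t"
      unfolding indefinite_integral_def
      by (rule integral_lebesgue_on_eq_lborel[OF hm']) (use ae t in \<open>auto elim!: eventually_mono\<close>)
    with bspec[OF x, of t] t show "x t = x 0 + indefinite_integral h t"
      by simp
  qed
qed

lemma has_weak_deriv_L2:
  assumes "has_weak_deriv x x'"
  shows "x \<in> L2"
proof -
  obtain h where [measurable]: "h \<in> borel_measurable borel" and hi: "integrable lborel h"
    and x: "\<And>t. 0 \<le> t \<Longrightarrow> t \<le> 1 \<Longrightarrow> x t = x 0 + indefinite_integral h t"
    using has_weak_deriv_borel_representative[OF assms] by blast
  have "(\<lambda>t. x 0 + indefinite_integral h t) \<in> borel_measurable (lebesgue_on {0..1})"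
    by (intro measurable_restrict_space1 measurable_completion) measurable
  then have "x \<in> borel_measurable (lebesgue_on {0..1})"
    by (rule measurable_cong[THEN iffD1, rotated]) (auto intro: x[symmetric])
  moreover have "\<bar>x t\<bar> \<le> \<bar>x 0\<bar> + (LINT r|lborel. \<bar>h r\<bar>)" if "t \<in> {0..1}" for t
    using x[of t] abs_indefinite_integral_le[OF _ hi, of t] that by auto
  ultimately show ?thesis
    by (rule L2_bounded)
qed

lemma integral_exp_between:
  fixes c r t :: real
  assumes "r \<le> t"
  shows "integrable lborel (\<lambda>s. if r \<le> s \<and> s \<le> t then c * exp (- c * s) else 0)"
    and "(LINT s|lborel. (if r \<le> s \<and> s \<le> t then c * exp (- c * s) else 0)) = exp (- c * r) - exp (- c * t)"
proof -
  have eq: "(\<lambda>s. if r \<le> s \<and> s \<le> t then c * exp (- c * s) else 0)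
      = (\<lambda>s. indicator {r..t} s *\<^sub>R (c * exp (- c * s)))"
    by (auto simp: indicator_def)
  have cont: "continuous_on {r..t} (\<lambda>s. c * exp (- c * s))"
    by (intro continuous_intros)
  show "integrable lborel (\<lambda>s. if r \<le> s \<and> s \<le> t then c * exp (- c * s) else 0)"
    using borel_integrable_atLeastAtMost'[OF cont] unfolding eq set_integrable_def .
  have "(LINT s|lborel. indicator {r..t} s *\<^sub>R (c * exp (- c * s))) = - exp (- c * t) - - exp (- c * r)"
  proof (rule integral_FTC_atLeastAtMost[OF assms _ cont])
    fix s assume "r \<le> s" "s \<le> t"
    show "((\<lambda>s. - exp (- c * s)) has_vector_derivative c * exp (- c * s)) (at s within {r..t})"
      by (auto intro!: derivative_eq_intros simp flip: has_real_derivative_iff_has_vector_derivative)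
  qed
  then show "(LINT s|lborel. (if r \<le> s \<and> s \<le> t then c * exp (- c * s) else 0)) = exp (- c * r) - exp (- c * t)"
    unfolding eq by simp
qed

text \<open>Fubini's theorem on the triangle \<open>0 \<le> r \<le> s \<le> t\<close>.\<close>

lemma integral_exp_indefinite_integral:
  fixes h :: "real \<Rightarrow> real" and c t :: real
  assumes [measurable]: "h \<in> borel_measurable borel" and h: "integrable lborel h" and c: "0 \<le> c"
  shows "(LINT s|lborel. (if 0 \<le> s \<and> s \<le> t then c * exp (- c * s) * indefinite_integral h s else 0))
       = (LINT r|lborel. (if 0 \<le> r \<and> r \<le> t then (exp (- c * r) - exp (- c * t)) * h r else 0))"
proof -
  define w where "w r s = (if 0 \<le> r \<and> r \<le> s \<and> s \<le> t then c * exp (- c * s) else 0)" for r s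
  define f where "f r s = w r s * h r" for r s
  have f_measurable: "(\<lambda>(r, s). f r s) \<in> borel_measurable (lborel \<Otimes>\<^sub>M lborel)"
    unfolding f_def w_def by measurable
  have w: "(LINT s|lborel. w r s) = (if 0 \<le> r \<and> r \<le> t then exp (- c * r) - exp (- c * t) else 0)
      \<and> integrable lborel (w r)" for r
  proof (cases "0 \<le> r \<and> r \<le> t")
    case True
    then have "w r = (\<lambda>s. if r \<le> s \<and> s \<le> t then c * exp (- c * s) else 0)"
      by (auto simp: w_def)
    then show ?thesis using True integral_exp_between[of r t c] by simp
  next
    case False
    then have "w r = (\<lambda>s. 0)"
      by (auto simp: w_def fun_eq_iff)
    then show ?thesis using False by auto
  qed
  then have w_integral: "(LINT s|lborel. w r s) = (if 0 \<le> r \<and> r \<le> t then exp (- c * r) - exp (- c * t) else 0)"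
    and w_integrable: "integrable lborel (w r)" for r
    by blast+
  have "integrable (lborel \<Otimes>\<^sub>M lborel) (\<lambda>(r, s). f r s)"
  proof (rule lborel_pair.Fubini_integrable[OF f_measurable])
    show "AE r in lborel. integrable lborel (\<lambda>s. case (r, s) of (r, s) \<Rightarrow> f r s)"
      using w_integrable by (simp add: f_def)
    have "w r s \<ge> 0" for r s
      using c by (simp add: w_def)
    then have "(LINT s|lborel. norm (f r s))
        = (if 0 \<le> r \<and> r \<le> t then (exp (- c * r) - exp (- c * t)) * \<bar>h r\<bar> else 0)" for r
      by (simp add: f_def abs_mult w_integral)
    moreover have "integrable lborel (\<lambda>r. if 0 \<le> r \<and> r \<le> t then (exp (- c * r) - exp (- c * t)) * \<bar>h r\<bar> else 0)"
    proof (rule integrable_if_bounded_mult[where B = 1])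
      show "\<bar>exp (- c * r) - exp (- c * t)\<bar> \<le> 1" if "0 \<le> r \<and> r \<le> t" for r
      proof -
        have "exp (- c * t) \<le> exp (- c * r)" "exp (- c * r) \<le> 1"
          using that c by (simp_all add: mult_left_mono)
        then show ?thesis
          using exp_gt_zero[of "- c * t"] by arith
      qed
    qed (use h in simp_all)
    ultimately show "integrable lborel (\<lambda>r. LINT s|lborel. norm (case (r, s) of (r, s) \<Rightarrow> f r s))"
      by simp
  qed
  then have "(LINT s|lborel. (LINT r|lborel. f r s)) = (LINT r|lborel. (LINT s|lborel. f r s))"
    by (rule lborel_pair.Fubini_integral)
  moreover have "(LINT r|lborel. f r s) = (if 0 \<le> s \<and> s \<le> t then c * exp (- c * s) * indefinite_integral h s else 0)" for s
  proof (cases "0 \<le> s \<and> s \<le> t")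
    case True
    then have "(\<lambda>r. f r s) = (\<lambda>r. c * exp (- c * s) * (if 0 \<le> r \<and> r \<le> s then h r else 0))"
      by (auto simp: f_def w_def fun_eq_iff)
    with True show ?thesis
      by (simp add: indefinite_integral_def)
  next
    case False
    then have "(\<lambda>r. f r s) = (\<lambda>r. 0)"
      by (auto simp: f_def w_def fun_eq_iff)
    with False show ?thesis
      by auto
  qed
  moreover have "(LINT s|lborel. f r s) = (if 0 \<le> r \<and> r \<le> t then (exp (- c * r) - exp (- c * t)) * h r else 0)" for r
    by (simp add: f_def w_integral)
  ultimately show ?thesis by simp
qed

lemma integral_exp_product_rule:
  fixes h :: "real \<Rightarrow> real" and c t x0 :: real
  assumes hm [measurable]: "h \<in> borel_measurable borel" and h: "integrable lborel h"
    and c: "0 \<le> c" and t: "0 \<le> t"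
  shows "(LINT s|lborel. (if 0 \<le> s \<and> s \<le> t then exp (- c * s) * (h s - c * (x0 + indefinite_integral h s)) else 0))
       = exp (- c * t) * (x0 + indefinite_integral h t) - x0"
proof -
  let ?F = "indefinite_integral h"
  have i1: "integrable lborel (\<lambda>s. if 0 \<le> s \<and> s \<le> t then exp (- c * s) * h s else 0)"
    by (rule integrable_if_bounded_mult[OF hm _ _ h, where B = 1]) (use c in auto)
  have i2: "integrable lborel (\<lambda>s. if 0 \<le> s \<and> s \<le> t then c * exp (- c * s) else 0)"
    using integral_exp_between(1)[OF t] .
  have "integrable lborel (\<lambda>s. if 0 \<le> s \<and> s \<le> t then ?F s * (if 0 \<le> s \<and> s \<le> t then c * exp (- c * s) else 0) else 0)"
    by (rule integrable_if_bounded_mult[OF _ _ _ i2]) (use abs_indefinite_integral_le[OF hm h] in auto)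
  then have i3: "integrable lborel (\<lambda>s. if 0 \<le> s \<and> s \<le> t then c * exp (- c * s) * ?F s else 0)"
    by (simp add: ac_simps cong: if_cong)
  have "(LINT s|lborel. (if 0 \<le> s \<and> s \<le> t then exp (- c * s) * (h s - c * (x0 + ?F s)) else 0))
      = (LINT s|lborel. (if 0 \<le> s \<and> s \<le> t then exp (- c * s) * h s else 0)
          - x0 * (if 0 \<le> s \<and> s \<le> t then c * exp (- c * s) else 0)
          - (if 0 \<le> s \<and> s \<le> t then c * exp (- c * s) * ?F s else 0))"
    by (rule Bochner_Integration.integral_cong) (auto simp: algebra_simps)
  also have "\<dots> = (LINT s|lborel. (if 0 \<le> s \<and> s \<le> t then exp (- c * s) * h s else 0))
      - x0 * (LINT s|lborel. (if 0 \<le> s \<and> s \<le> t then c * exp (- c * s) else 0))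
      - (LINT s|lborel. (if 0 \<le> s \<and> s \<le> t then c * exp (- c * s) * ?F s else 0))"
    using i1 i2 i3 by simp
  also have "(LINT s|lborel. (if 0 \<le> s \<and> s \<le> t then c * exp (- c * s) else 0)) = 1 - exp (- c * t)"
    using integral_exp_between(2)[OF t] by simp
  also have "(LINT s|lborel. (if 0 \<le> s \<and> s \<le> t then c * exp (- c * s) * ?F s else 0))
      = (LINT r|lborel. (if 0 \<le> r \<and> r \<le> t then (exp (- c * r) - exp (- c * t)) * h r else 0))"
    by (rule integral_exp_indefinite_integral[OF hm h c])
  also have "\<dots> = (LINT r|lborel. (if 0 \<le> r \<and> r \<le> t then exp (- c * r) * h r else 0)
      - exp (- c * t) * (if 0 \<le> r \<and> r \<le> t then h r else 0))"
    by (rule Bochner_Integration.integral_cong) (auto simp: algebra_simps)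
  also have "\<dots> = (LINT r|lborel. (if 0 \<le> r \<and> r \<le> t then exp (- c * r) * h r else 0)) - exp (- c * t) * ?F t"
    using i1 integrable_if_interval[OF hm h] by (simp add: indefinite_integral_def)
  finally show ?thesis
    by (simp add: algebra_simps)
qed

lemma has_weak_deriv_D_neg:
  assumes wd: "has_weak_deriv x x'" and \<sigma>: "0 \<le> \<sigma>"
  shows "has_weak_deriv (D (- \<sigma>) x) (D (- \<sigma>) (\<lambda>s. x' s - \<sigma> * x s))"
  unfolding has_weak_deriv_def
proof (intro conjI ballI)
  have x': "x' \<in> L2"
    using wd unfolding has_weak_deriv_def by blast
  have "(\<lambda>s. \<sigma> * x s) \<in> L2"
    by (rule L2_mult_bounded[OF has_weak_deriv_L2[OF wd], where B = "\<bar>\<sigma>\<bar>"]) auto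
  then show "D (- \<sigma>) (\<lambda>s. x' s - \<sigma> * x s) \<in> L2"
    by (intro D_L2 L2_diff x')
  obtain h where hm [measurable]: "h \<in> borel_measurable borel" and h: "integrable lborel h"
    and x'h: "AE s in lborel. 0 \<le> s \<and> s \<le> 1 \<longrightarrow> x' s = h s"
    and x: "\<And>t. 0 \<le> t \<Longrightarrow> t \<le> 1 \<Longrightarrow> x t = x 0 + indefinite_integral h t"
    using has_weak_deriv_borel_representative[OF wd] by blast
  fix t :: real assume "t \<in> {0..1}"
  then have t: "0 \<le> t" "t \<le> 1" by auto
  have "(LINT s|lebesgue_on {0..t}. D (- \<sigma>) (\<lambda>s. x' s - \<sigma> * x s) s)
      = (LINT s|lborel. (if 0 \<le> s \<and> s \<le> t then exp (- \<sigma> * s) * (h s - \<sigma> * (x 0 + indefinite_integral h s)) else 0))"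
  proof (rule integral_lebesgue_on_eq_lborel)
    show "AE s in lborel. 0 \<le> s \<and> s \<le> t \<longrightarrow>
        D (- \<sigma>) (\<lambda>s. x' s - \<sigma> * x s) s = exp (- \<sigma> * s) * (h s - \<sigma> * (x 0 + indefinite_integral h s))"
      using x'h
    proof eventually_elim
      case (elim s)
      show ?case
      proof
        assume s: "0 \<le> s \<and> s \<le> t"
        then have "x s = x 0 + indefinite_integral h s"
          using t by (intro x) auto
        with elim s t show "D (- \<sigma>) (\<lambda>s. x' s - \<sigma> * x s) s
            = exp (- \<sigma> * s) * (h s - \<sigma> * (x 0 + indefinite_integral h s))"
          by (simp add: D_def)
      qed
    qed
  qed measurable
  also have "\<dots> = exp (- \<sigma> * t) * (x 0 + indefinite_integral h t) - x 0"
    by (rule integral_exp_product_rule[OF hm h \<sigma> t(1)])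
  finally show "D (- \<sigma>) x t = D (- \<sigma>) x 0 + (LINT s|lebesgue_on {0..t}. D (- \<sigma>) (\<lambda>s. x' s - \<sigma> * x s) s)"
    using x[OF t] by (simp add: D_def)
qed

lemma nrm1_D_neg_le:
  assumes wd: "has_weak_deriv x x'" and \<sigma>: "0 \<le> \<sigma>"
  shows "nrm1 0 (D (- \<sigma>) x) (D (- \<sigma>) (\<lambda>s. x' s - \<sigma> * x s)) \<le> sqrt 2 * (1 + \<sigma>) * nrm1 \<sigma> x x'"
proof -
  let ?y' = "D (- \<sigma>) (\<lambda>s. x' s - \<sigma> * x s)"
  have x: "x \<in> L2" and x': "x' \<in> L2"
    using wd has_weak_deriv_L2 unfolding has_weak_deriv_def by blast+
  have "?y' = (\<lambda>s. D (- \<sigma>) x' s - \<sigma> * D (- \<sigma>) x s)"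
    by (simp add: D_def fun_eq_iff algebra_simps)
  then have "ip 0 ?y' ?y' \<le> 2 * ip 0 (D (- \<sigma>) x') (D (- \<sigma>) x') + 2 * \<sigma>\<^sup>2 * ip 0 (D (- \<sigma>) x) (D (- \<sigma>) x)"
    using ip_diff_scaled_le[OF D_L2[OF x'] D_L2[OF x]] by simp
  then have y': "ip 0 ?y' ?y' \<le> 2 * ip \<sigma> x' x' + 2 * \<sigma>\<^sup>2 * ip \<sigma> x x"
    by (simp only: ip_D_neg[of \<sigma> x' x'] ip_D_neg[of \<sigma> x x])
  have "ip \<sigma> x x + ip 0 ?y' ?y' \<le> 2 * (1 + \<sigma>)\<^sup>2 * (ip \<sigma> x x + ip \<sigma> x' x')"
  proof -
    have "2 * (1 + \<sigma>)\<^sup>2 * (ip \<sigma> x x + ip \<sigma> x' x')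
        = 2 * ip \<sigma> x x + 2 * ip \<sigma> x' x' + 4 * (\<sigma> * ip \<sigma> x x) + 4 * (\<sigma> * ip \<sigma> x' x')
          + 2 * \<sigma>\<^sup>2 * ip \<sigma> x x + 2 * (\<sigma>\<^sup>2 * ip \<sigma> x' x')"
      by (simp add: power2_eq_square algebra_simps)
    moreover have "0 \<le> \<sigma> * ip \<sigma> x x" "0 \<le> \<sigma> * ip \<sigma> x' x'" "0 \<le> \<sigma>\<^sup>2 * ip \<sigma> x' x'"
      using \<sigma> ip_nonneg by simp_all
    ultimately show ?thesis
      using y' ip_nonneg[of \<sigma> x] by linarith
  qed
  then have "sqrt (ip \<sigma> x x + ip 0 ?y' ?y') \<le> sqrt (2 * (1 + \<sigma>)\<^sup>2 * (ip \<sigma> x x + ip \<sigma> x' x'))"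
    by (rule real_sqrt_le_mono)
  also have "\<dots> = sqrt 2 * (1 + \<sigma>) * sqrt (ip \<sigma> x x + ip \<sigma> x' x')"
    using \<sigma> by (simp add: real_sqrt_mult)
  finally show ?thesis
    unfolding nrm1_def nrm_square ip_D_neg[of \<sigma> x x] by simp
qed

lemma approximation_constant_nonneg:
  assumes "X \<noteq> {}" and approx: "\<And>x x'. has_weak_deriv x x' \<Longrightarrow> dist_to 0 x X \<le> K * nrm1 0 x x'"
  shows "0 \<le> K"
proof -
  have "has_weak_deriv (\<lambda>_. 1) (\<lambda>_. 0)"
    unfolding has_weak_deriv_def L2_def by simp
  then have "dist_to 0 (\<lambda>_. 1) X \<le> K * nrm1 0 (\<lambda>_. 1) (\<lambda>_. 0)"
    by (rule approx)
  also have "nrm1 0 (\<lambda>_. 1) (\<lambda>_. 0) = 1 / 2"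
    unfolding nrm1_def nrm_def ip_def by (simp add: measure_restrict_space)
  finally have "dist_to 0 (\<lambda>_. 1) X \<le> K / 2"
    by simp
  then show ?thesis
    using dist_to_nonneg[OF \<open>X \<noteq> {}\<close>, of 0 "\<lambda>_. 1"] by simp
qed

theorem lemma2p6:
  fixes X :: "nat \<Rightarrow> (real \<Rightarrow> real) set"
    and Q :: "nat \<Rightarrow> (real \<Rightarrow> real) \<Rightarrow> (real \<Rightarrow> real)"
    and L \<sigma> :: real
  assumes dimX: "\<And>m. m \<ge> 1 \<Longrightarrow> L2_subspace_dim (X m) m"
    and projQ: "\<And>m. m \<ge> 1 \<Longrightarrow> is_orth_proj 0 (Q m) (X m)"
    and approx: "\<And>m x x'. m \<ge> 1 \<Longrightarrow> has_weak_deriv x x' \<Longrightarrow>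
                    dist_to 0 x (X m) \<le> L / real m * nrm1 0 x x'"
    and sigma_pos: "\<sigma> > 0"
  shows "(\<forall>m\<ge>1. is_orth_proj \<sigma> (\<lambda>x. D \<sigma> (Q m (D (-\<sigma>) x))) (D \<sigma> ` X m)) \<and>
         (\<forall>m\<ge>1. \<forall>x x'. has_weak_deriv x x' \<longrightarrow>
            dist_to \<sigma> x (D \<sigma> ` X m) \<le> sqrt 2 * (1 + \<sigma>) * L / real m * nrm1 \<sigma> x x')"
proof (intro conjI allI impI)
  fix m :: nat assume m: "1 \<le> m"
  show "is_orth_proj \<sigma> (\<lambda>x. D \<sigma> (Q m (D (- \<sigma>) x))) (D \<sigma> ` X m)"
    using is_orth_proj_D_conj[OF projQ[OF m]] .
  fix x x' assume wd: "has_weak_deriv x x'"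
  have "X m \<noteq> {}"
    using dimX[OF m] unfolding L2_subspace_dim_def by blast
  then have "0 \<le> L / real m"
    using approximation_constant_nonneg approx[OF m] by blast
  have "dist_to \<sigma> x (D \<sigma> ` X m) = dist_to 0 (D (- \<sigma>) x) (X m)"
    by (rule dist_to_D_image)
  also have "\<dots> \<le> L / real m * nrm1 0 (D (- \<sigma>) x) (D (- \<sigma>) (\<lambda>s. x' s - \<sigma> * x s))"
    using approx[OF m has_weak_deriv_D_neg[OF wd]] sigma_pos by simp
  also have "\<dots> \<le> L / real m * (sqrt 2 * (1 + \<sigma>) * nrm1 \<sigma> x x')"
    using nrm1_D_neg_le[OF wd] sigma_pos \<open>0 \<le> L / real m\<close> by (intro mult_left_mono) auto
  finally show "dist_to \<sigma> x (D \<sigma> ` X m) \<le> sqrt 2 * (1 + \<sigma>) * L / real m * nrm1 \<sigma> x x'"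
    by (simp add: ac_simps)
qed

end
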